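(* Assume the action of $H$ on $F$ is open and transitive and that the backward orbits $S_Q^*q$ of $S_Q$ are open for all $q\in Q$. Let $\mathcal C\subset X$ be a control set of $S_X$ and $q\in\pi^{-1}(\mathcal C_0)$. Then for every control set $D\subset E$ of $S_E$ with $D_0\cap E_{\pi(q)}\neq\emptyset$ there is a control set $A^D_q\subset F$ of $S_q$ such that $$D_0\cap E_{\pi(q)}=q\cdot(A^D_q)_0.$$ Furthermore, the map $D\mapsto A^D_q$ is a bijection from the set of control sets $D$ of $S_E$ with $D_0\cap E_{\pi(q)}\neq\emptyset$ onto the set of control sets of $S_q$ on $F$, and it preserves the order: $D\le D'$ if and only if $A^D_q\le A^{D'}_q$.
   Context: Let $X$ be a topological space, $H$ a topological group, $\pi:Q\to X$ a locally trivial principal bundle with structure group $H$ acting on the right ($q\mapsto qa$), and $F$ a topological space with a continuous left $H$-action; the action is open if $Vv$ is open for all open $V\subset H$ and $v\in F$. $E=Q\times_HF$ is the associated bundle (classes $q\cdot v$ with $(qa)\cdot v=q\cdot(av)$), $\pi:E\to X$, and $E_x$ denotes the fiber over $x$. A local map on a space $Y$ is a continuous map $\phi:\mathrm{dom}\,\phi\to Y$ with open domain; a local semigroup is a family of local maps such that $\psi\circ\phi$ (on $\phi^{-1}(\mathrm{dom}\,\psi)$) belongs to it whenever this domain is nonempty. Orbits: $Sy=\{\phi(y):y\in\mathrm{dom}\,\phi,\phi\in S\}$, backward orbits $S^*y=\{z:\exists\phi\in S,\ \phi(z)=y\}$. A point $y$ is self-accessible if $y\in\mathrm{int}(S^*y)$;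 a control set is $D=\{z:z\in\mathrm{cl}(Sy),\ y\in\mathrm{cl}(Sz)\}$ for a self-accessible $y$; its transitivity set $D_0$ is the set of self-accessible points of $D$; $D\le D'$ iff $y'\in Sy$ for some $y\in D_0$, $y'\in D'_0$. A local endomorphism of $Q$ is a continuous $\phi$ with $\mathrm{dom}\,\phi=\pi^{-1}(V)$, $V\subset X$ open, and $\phi(qa)=\phi(q)a$. $S_Q$ is a local semigroup of local endomorphisms of $Q$; it induces local semigroups $S_X=\{\phi_X\}$ on $X$ with $\phi_X(\pi(q))=\pi(\phi(q))$ and $S_E=\{\phi_E\}$ on $E$ with $\phi_E(q\cdot v)=\phi(q)\cdot v$. For $q\in Q$, $S_q=\{a\in H: qa\in S_Qq\}$, a subsemigroup of $H$, acting on $F$. *)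

theory Defs
  imports "HOL-Analysis.Analysis"
begin

definition topological_group ::
  "'h topology \<Rightarrow> ('h \<Rightarrow> 'h \<Rightarrow> 'h) \<Rightarrow> 'h \<Rightarrow> ('h \<Rightarrow> 'h) \<Rightarrow> bool" where
  "topological_group TH m e i \<longleftrightarrow>
     e \<in> topspace TH \<and>
     (\<forall>a\<in>topspace TH. \<forall>b\<in>topspace TH. m a b \<in> topspace TH) \<and>
     (\<forall>a\<in>topspace TH. i a \<in> topspace TH) \<and>
     (\<forall>a\<in>topspace TH. \<forall>b\<in>topspace TH. \<forall>c\<in>topspace TH. m (m a b) c = m a (m b c)) \<and>
     (\<forall>a\<in>topspace TH. m e a = a \<and> m a e = a) \<and>
     (\<forall>a\<in>topspace TH. m a (i a) = e \<and> m (i a) a = e) \<and>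
     continuous_map (prod_topology TH TH) TH (\<lambda>(a, b). m a b) \<and>
     continuous_map TH TH i"

definition continuous_left_action ::
  "'h topology \<Rightarrow> ('h \<Rightarrow> 'h \<Rightarrow> 'h) \<Rightarrow> 'h \<Rightarrow> 'f topology \<Rightarrow> ('h \<Rightarrow> 'f \<Rightarrow> 'f) \<Rightarrow> bool" where
  "continuous_left_action TH m e F la \<longleftrightarrow>
     (\<forall>a\<in>topspace TH. \<forall>v\<in>topspace F. la a v \<in> topspace F) \<and>
     (\<forall>v\<in>topspace F. la e v = v) \<and>
     (\<forall>a\<in>topspace TH. \<forall>b\<in>topspace TH. \<forall>v\<in>topspace F. la (m a b) v = la a (la b v)) \<and>
     continuous_map (prod_topology TH F) F (\<lambda>(a, v). la a v)"

definition open_action :: "'h topology \<Rightarrow> 'f topology \<Rightarrow> ('h \<Rightarrow> 'f \<Rightarrow> 'f) \<Rightarrow> bool" where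
  "open_action TH F la \<longleftrightarrow>
     (\<forall>V v. openin TH V \<and> v \<in> topspace F \<longrightarrow> openin F ((\<lambda>a. la a v) ` V))"

definition transitive_action :: "'h topology \<Rightarrow> 'f topology \<Rightarrow> ('h \<Rightarrow> 'f \<Rightarrow> 'f) \<Rightarrow> bool" where
  "transitive_action TH F la \<longleftrightarrow>
     (\<forall>v\<in>topspace F. \<forall>w\<in>topspace F. \<exists>a\<in>topspace TH. la a v = w)"

definition principal_bundle ::
  "'x topology \<Rightarrow> 'h topology \<Rightarrow> ('h \<Rightarrow> 'h \<Rightarrow> 'h) \<Rightarrow> 'h \<Rightarrow> ('h \<Rightarrow> 'h) \<Rightarrow>
   'q topology \<Rightarrow> ('q \<Rightarrow> 'x) \<Rightarrow> ('q \<Rightarrow> 'h \<Rightarrow> 'q) \<Rightarrow> bool" where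
  "principal_bundle X TH m e i Q \<pi> ra \<longleftrightarrow>
     topological_group TH m e i \<and>
     continuous_map Q X \<pi> \<and> \<pi> ` topspace Q = topspace X \<and>
     (\<forall>q\<in>topspace Q. \<forall>a\<in>topspace TH. ra q a \<in> topspace Q \<and> \<pi> (ra q a) = \<pi> q) \<and>
     (\<forall>q\<in>topspace Q. ra q e = q) \<and>
     (\<forall>q\<in>topspace Q. \<forall>a\<in>topspace TH. \<forall>b\<in>topspace TH. ra q (m a b) = ra (ra q a) b) \<and>
     continuous_map (prod_topology Q TH) Q (\<lambda>(q, a). ra q a) \<and>
     (\<forall>x\<in>topspace X. \<exists>U \<psi>. openin X U \<and> x \<in> U \<and>
        homeomorphic_map (subtopology Q {q \<in> topspace Q. \<pi> q \<in> U})
                         (prod_topology (subtopology X U) TH) \<psi> \<and>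
        (\<forall>q\<in>topspace Q. \<pi> q \<in> U \<longrightarrow> fst (\<psi> q) = \<pi> q \<and>
           (\<forall>a\<in>topspace TH. snd (\<psi> (ra q a)) = m (snd (\<psi> q)) a)))"

text \<open>The class \<open>q\<cdot>v\<close>: all pairs \<open>(q',v')\<close> with \<open>q = q'a\<close>, \<open>v' = av\<close> for some \<open>a \<in> H\<close>
  (so that \<open>(qa)\<cdot>v = q\<cdot>(av)\<close>).\<close>
definition assoc_cls ::
  "'h topology \<Rightarrow> 'q topology \<Rightarrow> ('q \<Rightarrow> 'h \<Rightarrow> 'q) \<Rightarrow> 'f topology \<Rightarrow> ('h \<Rightarrow> 'f \<Rightarrow> 'f) \<Rightarrow>
   'q \<Rightarrow> 'f \<Rightarrow> ('q \<times> 'f) set" where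
  "assoc_cls TH Q ra F la q v =
     {(q', v'). q' \<in> topspace Q \<and> v' \<in> topspace F \<and>
        (\<exists>a\<in>topspace TH. q = ra q' a \<and> v' = la a v)}"

definition assoc_space ::
  "'h topology \<Rightarrow> 'q topology \<Rightarrow> ('q \<Rightarrow> 'h \<Rightarrow> 'q) \<Rightarrow> 'f topology \<Rightarrow> ('h \<Rightarrow> 'f \<Rightarrow> 'f) \<Rightarrow>
   ('q \<times> 'f) set set" where
  "assoc_space TH Q ra F la =
     {assoc_cls TH Q ra F la q v | q v. q \<in> topspace Q \<and> v \<in> topspace F}"

definition assoc_top ::
  "'h topology \<Rightarrow> 'q topology \<Rightarrow> ('q \<Rightarrow> 'h \<Rightarrow> 'q) \<Rightarrow> 'f topology \<Rightarrow> ('h \<Rightarrow> 'f \<Rightarrow> 'f) \<Rightarrow>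
   ('q \<times> 'f) set topology" where
  "assoc_top TH Q ra F la =
     topology (\<lambda>U. U \<subseteq> assoc_space TH Q ra F la \<and>
       openin (prod_topology Q F)
         {p \<in> topspace (prod_topology Q F). assoc_cls TH Q ra F la (fst p) (snd p) \<in> U})"

definition assoc_fiber ::
  "'h topology \<Rightarrow> 'q topology \<Rightarrow> ('q \<Rightarrow> 'x) \<Rightarrow> ('q \<Rightarrow> 'h \<Rightarrow> 'q) \<Rightarrow> 'f topology \<Rightarrow>
   ('h \<Rightarrow> 'f \<Rightarrow> 'f) \<Rightarrow> 'x \<Rightarrow> ('q \<times> 'f) set set" where
  "assoc_fiber TH Q \<pi> ra F la x =
     {assoc_cls TH Q ra F la q' v | q' v. q' \<in> topspace Q \<and> \<pi> q' = x \<and> v \<in> topspace F}"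

definition assoc_image ::
  "'h topology \<Rightarrow> 'q topology \<Rightarrow> ('q \<Rightarrow> 'h \<Rightarrow> 'q) \<Rightarrow> 'f topology \<Rightarrow> ('h \<Rightarrow> 'f \<Rightarrow> 'f) \<Rightarrow>
   'q \<Rightarrow> 'f set \<Rightarrow> ('q \<times> 'f) set set" where
  "assoc_image TH Q ra F la q A = assoc_cls TH Q ra F la q ` A"

definition local_map :: "'a topology \<Rightarrow> ('a \<rightharpoonup> 'a) \<Rightarrow> bool" where
  "local_map Y \<phi> \<longleftrightarrow> openin Y (dom \<phi>) \<and>
     (\<forall>y\<in>dom \<phi>. the (\<phi> y) \<in> topspace Y) \<and>
     continuous_map (subtopology Y (dom \<phi>)) Y (\<lambda>y. the (\<phi> y))"

definition local_semigroup :: "'a topology \<Rightarrow> ('a \<rightharpoonup> 'a) set \<Rightarrow> bool" where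
  "local_semigroup Y S \<longleftrightarrow> (\<forall>\<phi>\<in>S. local_map Y \<phi>) \<and>
     (\<forall>\<phi>\<in>S. \<forall>\<psi>\<in>S. dom (map_comp \<psi> \<phi>) \<noteq> {} \<longrightarrow> map_comp \<psi> \<phi> \<in> S)"

definition orbit :: "('a \<rightharpoonup> 'a) set \<Rightarrow> 'a \<Rightarrow> 'a set" where
  "orbit S y = {the (\<phi> y) | \<phi>. \<phi> \<in> S \<and> y \<in> dom \<phi>}"

definition borbit :: "('a \<rightharpoonup> 'a) set \<Rightarrow> 'a \<Rightarrow> 'a set" where
  "borbit S y = {z. \<exists>\<phi>\<in>S. \<phi> z = Some y}"

definition self_accessible :: "'a topology \<Rightarrow> ('a \<rightharpoonup> 'a) set \<Rightarrow> 'a \<Rightarrow> bool" where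
  "self_accessible Y S y \<longleftrightarrow> y \<in> Y interior_of (borbit S y)"

definition control_set :: "'a topology \<Rightarrow> ('a \<rightharpoonup> 'a) set \<Rightarrow> 'a set \<Rightarrow> bool" where
  "control_set Y S D \<longleftrightarrow> (\<exists>y. self_accessible Y S y \<and>
     D = {z. z \<in> Y closure_of (orbit S y) \<and> y \<in> Y closure_of (orbit S z)})"

definition transitivity_set :: "'a topology \<Rightarrow> ('a \<rightharpoonup> 'a) set \<Rightarrow> 'a set \<Rightarrow> 'a set" where
  "transitivity_set Y S D = {z \<in> D. self_accessible Y S z}"

definition control_le :: "'a topology \<Rightarrow> ('a \<rightharpoonup> 'a) set \<Rightarrow> 'a set \<Rightarrow> 'a set \<Rightarrow> bool" where
  "control_le Y S D D' \<longleftrightarrow>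
     (\<exists>y\<in>transitivity_set Y S D. \<exists>y'\<in>transitivity_set Y S D'. y' \<in> orbit S y)"

definition local_endo ::
  "'x topology \<Rightarrow> 'h topology \<Rightarrow> 'q topology \<Rightarrow> ('q \<Rightarrow> 'x) \<Rightarrow> ('q \<Rightarrow> 'h \<Rightarrow> 'q) \<Rightarrow>
   ('q \<rightharpoonup> 'q) \<Rightarrow> bool" where
  "local_endo X TH Q \<pi> ra \<phi> \<longleftrightarrow>
     (\<exists>V. openin X V \<and> dom \<phi> = {q \<in> topspace Q. \<pi> q \<in> V}) \<and>
     (\<forall>q\<in>dom \<phi>. the (\<phi> q) \<in> topspace Q) \<and>
     continuous_map (subtopology Q (dom \<phi>)) Q (\<lambda>q. the (\<phi> q)) \<and>
     (\<forall>q\<in>dom \<phi>. \<forall>a\<in>topspace TH. \<phi> (ra q a) = Some (ra (the (\<phi> q)) a))"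

definition induced_X :: "('q \<Rightarrow> 'x) \<Rightarrow> ('q \<rightharpoonup> 'q) \<Rightarrow> ('x \<rightharpoonup> 'x)" where
  "induced_X \<pi> \<phi> = (\<lambda>x. if x \<in> \<pi> ` dom \<phi>
      then Some (\<pi> (the (\<phi> (SOME q. q \<in> dom \<phi> \<and> \<pi> q = x)))) else None)"

definition induced_E ::
  "'h topology \<Rightarrow> 'q topology \<Rightarrow> ('q \<Rightarrow> 'h \<Rightarrow> 'q) \<Rightarrow> 'f topology \<Rightarrow> ('h \<Rightarrow> 'f \<Rightarrow> 'f) \<Rightarrow>
   ('q \<rightharpoonup> 'q) \<Rightarrow> (('q \<times> 'f) set \<rightharpoonup> ('q \<times> 'f) set)" where
  "induced_E TH Q ra F la \<phi> = (\<lambda>c.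
     if c \<in> assoc_space TH Q ra F la \<and> (\<exists>p\<in>c. fst p \<in> dom \<phi>)
     then (let p = (SOME p. p \<in> c \<and> fst p \<in> dom \<phi>)
           in Some (assoc_cls TH Q ra F la (the (\<phi> (fst p))) (snd p)))
     else None)"

definition fiber_semigroup ::
  "'h topology \<Rightarrow> ('q \<Rightarrow> 'h \<Rightarrow> 'q) \<Rightarrow> ('q \<rightharpoonup> 'q) set \<Rightarrow> 'q \<Rightarrow> 'h set" where
  "fiber_semigroup TH ra SQ q = {a \<in> topspace TH. ra q a \<in> orbit SQ q}"

text \<open>A subset of H acting on F, viewed as a family of (globally defined) maps of F.\<close>
definition action_maps ::
  "'f topology \<Rightarrow> ('h \<Rightarrow> 'f \<Rightarrow> 'f) \<Rightarrow> 'h set \<Rightarrow> ('f \<rightharpoonup> 'f) set" where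
  "action_maps F la T = (\<lambda>a. (\<lambda>v. if v \<in> topspace F then Some (la a v) else None)) ` T"

end

theory Submission
  imports Defs
begin

(*
  The map v \<mapsto> q\<cdot>v identifies F with the fibre of E over \<pi> q, and it reflects both orbits and
  self-accessibility: a map of S_E sending q\<cdot>v to a point q\<cdot>w of that fibre does so through
  some a \<in> S_q with w = av; an open set of points steered to q\<cdot>v pulls back along the
  continuous map v \<mapsto> q\<cdot>v, and conversely an open set W steered to v by S_q yields the open
  set (S_Q^* q)\<cdot>W steered to q\<cdot>v.

  For semigroups whose orbits are transitive, a control set is determined by any of its
  transitivity points, these points are exactly the self-accessible points that reach and are
  reached by a given one, and D \<le> D' means that a transitivity point of D' is reached from one
  of D. All three notions are therefore transported by any map reflecting orbits and
  self-accessibility, which gives the bijection D \<mapsto> A^D_q and its compatibility with \<le>.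
*)

section \<open>Control sets of semigroups with transitive orbits\<close>

definition orbit_transitive :: "('a \<rightharpoonup> 'a) set \<Rightarrow> bool" where
  "orbit_transitive S \<longleftrightarrow> (\<forall>z u. u \<in> orbit S z \<longrightarrow> orbit S u \<subseteq> orbit S z)"

definition control_set_of :: "'a topology \<Rightarrow> ('a \<rightharpoonup> 'a) set \<Rightarrow> 'a \<Rightarrow> 'a set" where
  "control_set_of Y S y = {z. z \<in> Y closure_of orbit S y \<and> y \<in> Y closure_of orbit S z}"

lemma mem_orbit_iff: "u \<in> orbit S z \<longleftrightarrow> (\<exists>\<phi>\<in>S. \<phi> z = Some u)"
  unfolding orbit_def by force

lemma mem_borbit_iff_orbit: "z \<in> borbit S y \<longleftrightarrow> y \<in> orbit S z"
  unfolding borbit_def mem_orbit_iff by simp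

lemma orbit_transitive_subset:
  "orbit_transitive S \<Longrightarrow> u \<in> orbit S z \<Longrightarrow> orbit S u \<subseteq> orbit S z"
  unfolding orbit_transitive_def by blast

lemma orbit_transitiveD:
  "orbit_transitive S \<Longrightarrow> u \<in> orbit S z \<Longrightarrow> y \<in> orbit S u \<Longrightarrow> y \<in> orbit S z"
  unfolding orbit_transitive_def by blast

lemma local_semigroup_map_comp:
  assumes "local_semigroup Y S" "\<phi> \<in> S" "\<psi> \<in> S" "\<phi> z = Some u" "\<psi> u = Some y"
  shows "\<psi> \<circ>\<^sub>m \<phi> \<in> S" and "(\<psi> \<circ>\<^sub>m \<phi>) z = Some y"
proof -
  show comp: "(\<psi> \<circ>\<^sub>m \<phi>) z = Some y" using assms(4,5) by simp
  then have "dom (\<psi> \<circ>\<^sub>m \<phi>) \<noteq> {}" by blast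
  then show "\<psi> \<circ>\<^sub>m \<phi> \<in> S" using assms(1-3) unfolding local_semigroup_def by blast
qed

lemma self_accessible_in_topspace: "self_accessible Y S y \<Longrightarrow> y \<in> topspace Y"
  unfolding self_accessible_def using interior_of_subset_topspace by fast

lemma self_accessible_in_orbit: "self_accessible Y S y \<Longrightarrow> y \<in> orbit S y"
  unfolding self_accessible_def borbit_def mem_orbit_iff using interior_of_subset by fast

text \<open>A self-accessible point is reached from an open set of points; hence approaching it by
  an orbit means actually reaching it.\<close>
lemma self_accessible_in_closure_orbit:
  assumes S: "orbit_transitive S" and y: "self_accessible Y S y"
    and cl: "y \<in> Y closure_of orbit S z"
  shows "y \<in> orbit S z"
proof -
  have "openin Y (Y interior_of borbit S y)" "y \<in> Y interior_of borbit S y"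
    using y unfolding self_accessible_def by simp_all
  with cl obtain u where u: "u \<in> orbit S z" "u \<in> Y interior_of borbit S y"
    unfolding in_closure_of by blast
  then have "y \<in> orbit S u"
    using interior_of_subset unfolding borbit_def mem_orbit_iff by fast
  with S u(1) show ?thesis by (rule orbit_transitiveD)
qed

lemma control_set_iff: "control_set Y S D \<longleftrightarrow> (\<exists>y. self_accessible Y S y \<and> D = control_set_of Y S y)"
  unfolding control_set_def control_set_of_def ..

lemma in_closure_of_self: "x \<in> topspace Y \<Longrightarrow> x \<in> A \<Longrightarrow> x \<in> Y closure_of A"
  using closure_of_subset_Int by fast

lemma mem_transitivity_set_control_set_of:
  assumes S: "orbit_transitive S" and y: "self_accessible Y S y"
  shows "z \<in> transitivity_set Y S (control_set_of Y S y) \<longleftrightarrow>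
    self_accessible Y S z \<and> z \<in> orbit S y \<and> y \<in> orbit S z"
proof
  assume "z \<in> transitivity_set Y S (control_set_of Y S y)"
  then have z: "self_accessible Y S z" "z \<in> Y closure_of orbit S y" "y \<in> Y closure_of orbit S z"
    unfolding transitivity_set_def control_set_of_def by simp_all
  show "self_accessible Y S z \<and> z \<in> orbit S y \<and> y \<in> orbit S z"
    using self_accessible_in_closure_orbit[OF S z(1,2)] self_accessible_in_closure_orbit[OF S y z(3)]
      z(1) by simp
next
  assume z: "self_accessible Y S z \<and> z \<in> orbit S y \<and> y \<in> orbit S z"
  then have "z \<in> Y closure_of orbit S y" "y \<in> Y closure_of orbit S z"
    using in_closure_of_self[OF self_accessible_in_topspace] y by auto
  with z show "z \<in> transitivity_set Y S (control_set_of Y S y)"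
    unfolding transitivity_set_def control_set_of_def by simp
qed

lemma closure_orbit_self_accessible_trans:
  assumes "orbit_transitive S" "self_accessible Y S z" "z \<in> Y closure_of orbit S w"
    and "y \<in> topspace Y" "y \<in> orbit S z"
  shows "y \<in> Y closure_of orbit S w"
proof -
  have "z \<in> orbit S w"
    using self_accessible_in_closure_orbit assms(1-3) .
  then have "y \<in> orbit S w"
    by (rule orbit_transitiveD[OF assms(1) _ assms(5)])
  with assms(4) show ?thesis
    by (rule in_closure_of_self)
qed

lemma control_set_eq_control_set_of:
  assumes S: "orbit_transitive S" and D: "control_set Y S D" and z: "z \<in> transitivity_set Y S D"
  shows "D = control_set_of Y S z"
proof -
  obtain y where y: "self_accessible Y S y" and D_eq: "D = control_set_of Y S y"
    using D unfolding control_set_iff by blast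
  have "z \<in> transitivity_set Y S (control_set_of Y S y)"
    using z D_eq by simp
  then have z_sa: "self_accessible Y S z" and zy: "z \<in> orbit S y" and yz: "y \<in> orbit S z"
    unfolding mem_transitivity_set_control_set_of[OF S y] by simp_all
  have "orbit S z = orbit S y"
    by (intro equalityI orbit_transitive_subset[OF S] zy yz)
  moreover have "z \<in> Y closure_of orbit S w \<longleftrightarrow> y \<in> Y closure_of orbit S w" for w
  proof
    assume "z \<in> Y closure_of orbit S w"
    then show "y \<in> Y closure_of orbit S w"
      by (rule closure_orbit_self_accessible_trans[OF S z_sa _ self_accessible_in_topspace[OF y] yz])
  next
    assume "y \<in> Y closure_of orbit S w"
    then show "z \<in> Y closure_of orbit S w"
      by (rule closure_orbit_self_accessible_trans[OF S y _ self_accessible_in_topspace[OF z_sa] zy])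
  qed
  ultimately show ?thesis
    unfolding D_eq control_set_of_def by simp
qed

lemma transitivity_set_in_orbit:
  assumes S: "orbit_transitive S" and D: "control_set Y S D"
    and "y \<in> transitivity_set Y S D" "z \<in> transitivity_set Y S D"
  shows "z \<in> orbit S y"
proof -
  have "self_accessible Y S y"
    using assms(3) unfolding transitivity_set_def by simp
  then show ?thesis
    using assms(4) control_set_eq_control_set_of[OF S D assms(3)]
      mem_transitivity_set_control_set_of[OF S] by simp
qed

lemma control_le_iff:
  assumes S: "orbit_transitive S" and D: "control_set Y S D" and D': "control_set Y S D'"
    and y: "y \<in> transitivity_set Y S D" and y': "y' \<in> transitivity_set Y S D'"
  shows "control_le Y S D D' \<longleftrightarrow> y' \<in> orbit S y"
proof
  assume "control_le Y S D D'"
  then obtain z z' where "z \<in> transitivity_set Y S D" "z' \<in> transitivity_set Y S D'"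
    and "z' \<in> orbit S z"
    unfolding control_le_def by blast
  then have "z \<in> orbit S y" "y' \<in> orbit S z'"
    using transitivity_set_in_orbit[OF S D y] transitivity_set_in_orbit[OF S D' _ y'] by simp_all
  with \<open>z' \<in> orbit S z\<close> show "y' \<in> orbit S y"
    using orbit_transitiveD[OF S] by metis
next
  assume "y' \<in> orbit S y"
  with y y' show "control_le Y S D D'"
    unfolding control_le_def by blast
qed

section \<open>Transport of control sets along a map reflecting orbits\<close>

locale orbit_correspondence =
  fixes Y :: "'y topology" and SY :: "('y \<rightharpoonup> 'y) set"
    and Z :: "'z topology" and SZ :: "('z \<rightharpoonup> 'z) set"
    and j :: "'z \<Rightarrow> 'y"
  assumes transitive_Y: "orbit_transitive SY"
    and transitive_Z: "orbit_transitive SZ"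
    and orbit_reflect: "\<And>v w. v \<in> topspace Z \<Longrightarrow> w \<in> topspace Z \<Longrightarrow>
      j w \<in> orbit SY (j v) \<longleftrightarrow> w \<in> orbit SZ v"
    and self_accessible_reflect: "\<And>v. v \<in> topspace Z \<Longrightarrow>
      self_accessible Y SY (j v) \<longleftrightarrow> self_accessible Z SZ v"
begin

lemma mem_transitivity_set_pullback:
  assumes D: "control_set Y SY D" and v: "v \<in> topspace Z" "j v \<in> transitivity_set Y SY D"
  shows "w \<in> transitivity_set Z SZ (control_set_of Z SZ v) \<longleftrightarrow>
    w \<in> topspace Z \<and> j w \<in> transitivity_set Y SY D"
proof -
  have "self_accessible Y SY (j v)"
    using v(2) unfolding transitivity_set_def by simp
  then have v_sa: "self_accessible Z SZ v"
    using self_accessible_reflect[OF v(1)] by simp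
  have D_eq: "D = control_set_of Y SY (j v)"
    using control_set_eq_control_set_of[OF transitive_Y D v(2)] .
  show ?thesis
  proof (cases "w \<in> topspace Z")
    case True
    then show ?thesis
      unfolding D_eq mem_transitivity_set_control_set_of[OF transitive_Z v_sa]
        mem_transitivity_set_control_set_of[OF transitive_Y \<open>self_accessible Y SY (j v)\<close>]
      using self_accessible_reflect orbit_reflect v(1) by simp
  next
    case False
    then show ?thesis
      using self_accessible_in_topspace[of Z SZ w] unfolding transitivity_set_def by blast
  qed
qed

definition meets_image :: "'y set \<Rightarrow> bool" where
  "meets_image D \<longleftrightarrow> control_set Y SY D \<and> transitivity_set Y SY D \<inter> j ` topspace Z \<noteq> {}"

definition base_point :: "'y set \<Rightarrow> 'z" where
  "base_point D = (SOME v. v \<in> topspace Z \<and> j v \<in> transitivity_set Y SY D)"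

definition pullback_control_set :: "'y set \<Rightarrow> 'z set" where
  "pullback_control_set D = control_set_of Z SZ (base_point D)"

lemma base_point:
  assumes "meets_image D"
  shows "base_point D \<in> topspace Z" "j (base_point D) \<in> transitivity_set Y SY D"
proof -
  have "\<exists>v. v \<in> topspace Z \<and> j v \<in> transitivity_set Y SY D"
    using assms unfolding meets_image_def by blast
  then show "base_point D \<in> topspace Z" "j (base_point D) \<in> transitivity_set Y SY D"
    unfolding base_point_def by (metis (mono_tags, lifting) someI_ex)+
qed

lemma mem_transitivity_set_pullback_control_set:
  assumes "meets_image D"
  shows "w \<in> transitivity_set Z SZ (pullback_control_set D) \<longleftrightarrow>
    w \<in> topspace Z \<and> j w \<in> transitivity_set Y SY D"
  unfolding pullback_control_set_def
  using mem_transitivity_set_pullback base_point assms unfolding meets_image_def by blast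

lemma base_point_in_transitivity_set:
  "meets_image D \<Longrightarrow> base_point D \<in> transitivity_set Z SZ (pullback_control_set D)"
  using mem_transitivity_set_pullback_control_set base_point by blast

lemma control_set_pullback_control_set:
  assumes "meets_image D"
  shows "control_set Z SZ (pullback_control_set D)"
proof -
  have "self_accessible Z SZ (base_point D)"
    using base_point_in_transitivity_set[OF assms] unfolding transitivity_set_def by simp
  then show ?thesis
    unfolding control_set_iff pullback_control_set_def by blast
qed

lemma transitivity_set_inter_image:
  assumes "meets_image D"
  shows "transitivity_set Y SY D \<inter> j ` topspace Z =
    j ` transitivity_set Z SZ (pullback_control_set D)"
  using mem_transitivity_set_pullback_control_set[OF assms] by blast

lemma inj_on_pullback_control_set: "inj_on pullback_control_set (Collect meets_image)"
proof (rule inj_onI)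
  fix D D' assume D: "D \<in> Collect meets_image" and D': "D' \<in> Collect meets_image"
    and eq: "pullback_control_set D = pullback_control_set D'"
  let ?y = "j (base_point D)"
  have "?y \<in> transitivity_set Y SY D"
    using base_point D by simp
  moreover have "?y \<in> transitivity_set Y SY D'"
    using base_point_in_transitivity_set[of D] mem_transitivity_set_pullback_control_set[of D'] D D' eq
    by simp
  ultimately show "D = D'"
    using control_set_eq_control_set_of[OF transitive_Y] D D' unfolding meets_image_def
    by (metis mem_Collect_eq)
qed

lemma image_pullback_control_set:
  "pullback_control_set ` Collect meets_image = {B. control_set Z SZ B}"
proof (intro equalityI subsetI)
  fix B assume "B \<in> pullback_control_set ` Collect meets_image"
  then show "B \<in> {B. control_set Z SZ B}"
    using control_set_pullback_control_set by auto
next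
  fix B assume "B \<in> {B. control_set Z SZ B}"
  then obtain v where v: "self_accessible Z SZ v" and B_eq: "B = control_set_of Z SZ v"
    unfolding control_set_iff by blast
  have v_Z: "v \<in> topspace Z"
    using self_accessible_in_topspace[OF v] .
  then have jv: "self_accessible Y SY (j v)"
    using self_accessible_reflect v by simp
  define D where "D = control_set_of Y SY (j v)"
  have jv_D: "j v \<in> transitivity_set Y SY D"
    unfolding D_def mem_transitivity_set_control_set_of[OF transitive_Y jv]
    using jv self_accessible_in_orbit by simp
  have D: "meets_image D"
    unfolding meets_image_def D_def control_set_iff
    using jv jv_D v_Z D_def by blast
  have "v \<in> transitivity_set Z SZ (pullback_control_set D)"
    using mem_transitivity_set_pullback_control_set[OF D] v_Z jv_D by simp
  then have "pullback_control_set D = B"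
    unfolding B_eq
    by (rule control_set_eq_control_set_of[OF transitive_Z control_set_pullback_control_set[OF D]])
  with D show "B \<in> pullback_control_set ` Collect meets_image"
    by blast
qed

lemma control_le_pullback_control_set:
  assumes D: "meets_image D" and D': "meets_image D'"
  shows "control_le Y SY D D' \<longleftrightarrow>
    control_le Z SZ (pullback_control_set D) (pullback_control_set D')"
proof -
  have "control_le Y SY D D' \<longleftrightarrow> j (base_point D') \<in> orbit SY (j (base_point D))"
    using control_le_iff[OF transitive_Y] base_point D D' unfolding meets_image_def by blast
  also have "\<dots> \<longleftrightarrow> base_point D' \<in> orbit SZ (base_point D)"
    using orbit_reflect base_point D D' by blast
  also have "\<dots> \<longleftrightarrow> control_le Z SZ (pullback_control_set D) (pullback_control_set D')"
    using control_le_iff[OF transitive_Z] control_set_pullback_control_set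
      base_point_in_transitivity_set D D' by blast
  finally show ?thesis .
qed

theorem control_set_correspondence:
  "\<exists>A. (\<forall>D\<in>Collect meets_image. control_set Z SZ (A D) \<and>
          transitivity_set Y SY D \<inter> j ` topspace Z = j ` transitivity_set Z SZ (A D)) \<and>
       bij_betw A (Collect meets_image) {B. control_set Z SZ B} \<and>
       (\<forall>D\<in>Collect meets_image. \<forall>D'\<in>Collect meets_image.
          control_le Y SY D D' \<longleftrightarrow> control_le Z SZ (A D) (A D'))"
proof (intro exI conjI ballI)
  show "bij_betw pullback_control_set (Collect meets_image) {B. control_set Z SZ B}"
    unfolding bij_betw_def using inj_on_pullback_control_set image_pullback_control_set ..
qed (simp_all add: control_set_pullback_control_set transitivity_set_inter_image
    control_le_pullback_control_set)

end

section \<open>The associated bundle\<close>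

locale associated_bundle =
  fixes X :: "'x topology" and TH :: "'h topology"
    and m :: "'h \<Rightarrow> 'h \<Rightarrow> 'h" and e :: 'h and i :: "'h \<Rightarrow> 'h"
    and Q :: "'q topology" and \<pi> :: "'q \<Rightarrow> 'x" and ra :: "'q \<Rightarrow> 'h \<Rightarrow> 'q"
    and F :: "'f topology" and la :: "'h \<Rightarrow> 'f \<Rightarrow> 'f"
  assumes princ: "principal_bundle X TH m e i Q \<pi> ra"
    and action: "continuous_left_action TH m e F la"
begin

abbreviation "cls \<equiv> assoc_cls TH Q ra F la"
abbreviation "E \<equiv> assoc_top TH Q ra F la"

lemma group: "topological_group TH m e i"
  using princ by (simp add: principal_bundle_def)

lemma m_closed: "a \<in> topspace TH \<Longrightarrow> b \<in> topspace TH \<Longrightarrow> m a b \<in> topspace TH"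
  and inv_closed: "a \<in> topspace TH \<Longrightarrow> i a \<in> topspace TH"
  and one_closed: "e \<in> topspace TH"
  and m_assoc: "a \<in> topspace TH \<Longrightarrow> b \<in> topspace TH \<Longrightarrow> c \<in> topspace TH \<Longrightarrow>
    m (m a b) c = m a (m b c)"
  and l_one: "a \<in> topspace TH \<Longrightarrow> m e a = a"
  and r_inv: "a \<in> topspace TH \<Longrightarrow> m a (i a) = e"
  and l_inv: "a \<in> topspace TH \<Longrightarrow> m (i a) a = e"
  using group by (simp_all add: topological_group_def)

lemma ra_closed: "p \<in> topspace Q \<Longrightarrow> a \<in> topspace TH \<Longrightarrow> ra p a \<in> topspace Q"
  and pi_ra: "p \<in> topspace Q \<Longrightarrow> a \<in> topspace TH \<Longrightarrow> \<pi> (ra p a) = \<pi> p"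
  and ra_one: "p \<in> topspace Q \<Longrightarrow> ra p e = p"
  and ra_m: "p \<in> topspace Q \<Longrightarrow> a \<in> topspace TH \<Longrightarrow> b \<in> topspace TH \<Longrightarrow>
    ra p (m a b) = ra (ra p a) b"
  and continuous_ra: "continuous_map (prod_topology Q TH) Q (\<lambda>(p, a). ra p a)"
  using princ by (simp_all add: principal_bundle_def)

lemma la_closed: "a \<in> topspace TH \<Longrightarrow> v \<in> topspace F \<Longrightarrow> la a v \<in> topspace F"
  and la_one: "v \<in> topspace F \<Longrightarrow> la e v = v"
  and la_m: "a \<in> topspace TH \<Longrightarrow> b \<in> topspace TH \<Longrightarrow> v \<in> topspace F \<Longrightarrow>
    la (m a b) v = la a (la b v)"
  and continuous_la: "continuous_map (prod_topology TH F) F (\<lambda>(a, v). la a v)"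
  using action by (simp_all add: continuous_left_action_def)

lemma ra_ra_inv: "p \<in> topspace Q \<Longrightarrow> a \<in> topspace TH \<Longrightarrow> ra (ra p a) (i a) = p"
  by (metis ra_m inv_closed r_inv ra_one)

lemma ra_inv_ra: "p \<in> topspace Q \<Longrightarrow> a \<in> topspace TH \<Longrightarrow> ra (ra p (i a)) a = p"
  by (metis ra_m inv_closed l_inv ra_one)

lemma la_inv_la: "v \<in> topspace F \<Longrightarrow> a \<in> topspace TH \<Longrightarrow> la (i a) (la a v) = v"
  by (metis la_m inv_closed l_inv la_one)

text \<open>Two points in the same fibre of \<open>\<pi>\<close> differ by the right action: compare their
  \<open>H\<close>-coordinates in a local trivialisation, which is injective and \<open>H\<close>-equivariant.\<close>
lemma same_fibre_imp_ra:
  assumes p: "p \<in> topspace Q" and p': "p' \<in> topspace Q" and fibre: "\<pi> p' = \<pi> p"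
  shows "\<exists>a\<in>topspace TH. p' = ra p a"
proof -
  have "\<pi> p \<in> topspace X"
    using princ p unfolding principal_bundle_def by blast
  then obtain U \<psi> where U: "\<pi> p \<in> U"
    and hom: "homeomorphic_map (subtopology Q {q \<in> topspace Q. \<pi> q \<in> U})
                (prod_topology (subtopology X U) TH) \<psi>"
    and triv: "\<forall>q\<in>topspace Q. \<pi> q \<in> U \<longrightarrow> fst (\<psi> q) = \<pi> q \<and>
                 (\<forall>a\<in>topspace TH. snd (\<psi> (ra q a)) = m (snd (\<psi> q)) a)"
    using princ unfolding principal_bundle_def by blast
  let ?V = "{q \<in> topspace Q. \<pi> q \<in> U}"
  have inj: "inj_on \<psi> ?V"
    using homeomorphic_imp_injective_map[OF hom] by (simp add: Int_absorb1)
  have onto: "\<psi> ` ?V = (topspace X \<inter> U) \<times> topspace TH"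
    using homeomorphic_imp_surjective_map[OF hom] by (simp add: Int_absorb1)
  have pV: "p \<in> ?V" and p'V: "p' \<in> ?V"
    using p p' U fibre by simp_all
  define g g' where "g = snd (\<psi> p)" and "g' = snd (\<psi> p')"
  have g: "g \<in> topspace TH" and g': "g' \<in> topspace TH"
    using imageI[OF pV, of \<psi>] imageI[OF p'V, of \<psi>] unfolding onto g_def g'_def by auto
  define a where "a = m (i g) g'"
  have a: "a \<in> topspace TH"
    unfolding a_def using m_closed inv_closed g g' by blast
  have paV: "ra p a \<in> ?V"
    using ra_closed[OF p a] pi_ra[OF p a] U by simp
  have "snd (\<psi> (ra p a)) = m g a"
    using triv p U a unfolding g_def by blast
  also have "\<dots> = g'"
    unfolding a_def using m_assoc r_inv l_one g g' inv_closed by metis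
  finally have "\<psi> (ra p a) = \<psi> p'"
    using triv paV p'V fibre pi_ra[OF p a] unfolding g'_def by (simp add: prod_eq_iff)
  then have "ra p a = p'"
    using inj paV p'V unfolding inj_on_def by blast
  with a show ?thesis
    by blast
qed

lemma mem_cls_iff: "(p', v') \<in> cls p v \<longleftrightarrow> p' \<in> topspace Q \<and> v' \<in> topspace F \<and>
    (\<exists>a\<in>topspace TH. p = ra p' a \<and> v' = la a v)"
  by (simp add: assoc_cls_def)

lemma cls_refl: "p \<in> topspace Q \<Longrightarrow> v \<in> topspace F \<Longrightarrow> (p, v) \<in> cls p v"
  unfolding mem_cls_iff using one_closed ra_one la_one by metis

lemma cls_eq_iff:
  assumes "p1 \<in> topspace Q" "p2 \<in> topspace Q" "v1 \<in> topspace F" "v2 \<in> topspace F"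
  shows "cls p1 v1 = cls p2 v2 \<longleftrightarrow> (\<exists>a\<in>topspace TH. p1 = ra p2 a \<and> v2 = la a v1)"
proof
  assume "cls p1 v1 = cls p2 v2"
  then have "(p2, v2) \<in> cls p1 v1"
    using cls_refl assms by metis
  then show "\<exists>a\<in>topspace TH. p1 = ra p2 a \<and> v2 = la a v1"
    unfolding mem_cls_iff by blast
next
  assume "\<exists>a\<in>topspace TH. p1 = ra p2 a \<and> v2 = la a v1"
  then obtain a where a: "a \<in> topspace TH" "p1 = ra p2 a" "v2 = la a v1"
    by blast
  have "(p', v') \<in> cls p1 v1 \<longleftrightarrow> (p', v') \<in> cls p2 v2" for p' v'
  proof
    assume "(p', v') \<in> cls p1 v1"
    then obtain b where b: "p' \<in> topspace Q" "v' \<in> topspace F" "b \<in> topspace TH"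
      "p1 = ra p' b" "v' = la b v1"
      unfolding mem_cls_iff by blast
    have "p2 = ra p' (m b (i a))"
      using ra_ra_inv[OF assms(2) a(1)] ra_m[OF b(1,3) inv_closed[OF a(1)]] a(2) b(4) by simp
    moreover have "v' = la (m b (i a)) v2"
      using la_m[OF b(3) inv_closed[OF a(1)] assms(4)] la_inv_la[OF assms(3) a(1)] a(3) b(5)
      by simp
    ultimately show "(p', v') \<in> cls p2 v2"
      unfolding mem_cls_iff using b a m_closed inv_closed by blast
  next
    assume "(p', v') \<in> cls p2 v2"
    then obtain b where b: "p' \<in> topspace Q" "v' \<in> topspace F" "b \<in> topspace TH"
      "p2 = ra p' b" "v' = la b v2"
      unfolding mem_cls_iff by blast
    have "p1 = ra p' (m b a)" and "v' = la (m b a) v1"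
      using a b ra_m[OF b(1,3) a(1)] la_m[OF b(3) a(1) assms(3)] by simp_all
    then show "(p', v') \<in> cls p1 v1"
      unfolding mem_cls_iff using b a m_closed by blast
  qed
  then show "cls p1 v1 = cls p2 v2"
    by auto
qed

lemma cls_ra: "p \<in> topspace Q \<Longrightarrow> a \<in> topspace TH \<Longrightarrow> v \<in> topspace F \<Longrightarrow>
    cls (ra p a) v = cls p (la a v)"
  using cls_eq_iff ra_closed la_closed by metis

lemma assoc_fiber_eq_image:
  assumes p: "p \<in> topspace Q"
  shows "assoc_fiber TH Q \<pi> ra F la (\<pi> p) = cls p ` topspace F"
proof (intro equalityI subsetI)
  fix z assume "z \<in> assoc_fiber TH Q \<pi> ra F la (\<pi> p)"
  then obtain p' v where p': "p' \<in> topspace Q" "\<pi> p' = \<pi> p" and v: "v \<in> topspace F"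
    and z: "z = cls p' v"
    unfolding assoc_fiber_def by blast
  obtain a where a: "a \<in> topspace TH" "p' = ra p a"
    using same_fibre_imp_ra[OF p p'] by blast
  have "z = cls p (la a v)"
    using cls_ra[OF p a(1) v] a(2) z by simp
  then show "z \<in> cls p ` topspace F"
    using la_closed[OF a(1) v] by blast
next
  fix z assume "z \<in> cls p ` topspace F"
  then show "z \<in> assoc_fiber TH Q \<pi> ra F la (\<pi> p)"
    unfolding assoc_fiber_def using p by blast
qed

lemma cls_in_assoc_space: "p \<in> topspace Q \<Longrightarrow> v \<in> topspace F \<Longrightarrow> cls p v \<in> assoc_space TH Q ra F la"
  unfolding assoc_space_def by blast

abbreviation cls_preimage :: "('q \<times> 'f) set set \<Rightarrow> ('q \<times> 'f) set" where
  "cls_preimage U \<equiv> {x \<in> topspace (prod_topology Q F). cls (fst x) (snd x) \<in> U}"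

lemma istopology_assoc_top:
  "istopology (\<lambda>U. U \<subseteq> assoc_space TH Q ra F la \<and> openin (prod_topology Q F) (cls_preimage U))"
  unfolding istopology_def
proof (rule conjI; intro allI impI)
  fix S T
  assume "S \<subseteq> assoc_space TH Q ra F la \<and> openin (prod_topology Q F) (cls_preimage S)"
    and "T \<subseteq> assoc_space TH Q ra F la \<and> openin (prod_topology Q F) (cls_preimage T)"
  moreover have "cls_preimage (S \<inter> T) = cls_preimage S \<inter> cls_preimage T"
    by blast
  ultimately show "S \<inter> T \<subseteq> assoc_space TH Q ra F la \<and>
      openin (prod_topology Q F) (cls_preimage (S \<inter> T))"
    by auto
next
  fix K
  assume K: "\<forall>S\<in>K. S \<subseteq> assoc_space TH Q ra F la \<and> openin (prod_topology Q F) (cls_preimage S)"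
  have "cls_preimage (\<Union>K) = \<Union>(cls_preimage ` K)"
    by blast
  moreover have "openin (prod_topology Q F) (\<Union>(cls_preimage ` K))"
    using K by (intro openin_Union) blast
  ultimately show "\<Union>K \<subseteq> assoc_space TH Q ra F la \<and>
      openin (prod_topology Q F) (cls_preimage (\<Union>K))"
    using K by auto
qed

lemma openin_assoc_top:
  "openin E U \<longleftrightarrow> U \<subseteq> assoc_space TH Q ra F la \<and> openin (prod_topology Q F) (cls_preimage U)"
  unfolding assoc_top_def topology_inverse'[OF istopology_assoc_top] ..

lemma topspace_assoc_top: "topspace E = assoc_space TH Q ra F la"
proof
  show "topspace E \<subseteq> assoc_space TH Q ra F la"
    unfolding topspace_def openin_assoc_top by blast
next
  have "cls_preimage (assoc_space TH Q ra F la) = topspace (prod_topology Q F)"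
    using cls_in_assoc_space by auto
  then have "openin E (assoc_space TH Q ra F la)"
    unfolding openin_assoc_top using openin_topspace[of "prod_topology Q F"] by simp
  then show "assoc_space TH Q ra F la \<subseteq> topspace E"
    by (rule openin_subset)
qed

lemma continuous_map_cls:
  assumes p: "p \<in> topspace Q"
  shows "continuous_map F E (cls p)"
  unfolding continuous_map
proof (intro conjI allI impI)
  show "cls p ` topspace F \<subseteq> topspace E"
    unfolding topspace_assoc_top using cls_in_assoc_space p by blast
next
  fix U assume "openin E U"
  moreover have "continuous_map F (prod_topology Q F) (\<lambda>v. (p, v))"
    using p by (simp add: continuous_map_pairwise o_def)
  ultimately have "openin F {v \<in> topspace F. (p, v) \<in> cls_preimage U}"
    unfolding openin_assoc_top using openin_continuous_map_preimage by blast
  moreover have "{v \<in> topspace F. (p, v) \<in> cls_preimage U} = {v \<in> topspace F. cls p v \<in> U}"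
    using p by auto
  ultimately show "openin F {v \<in> topspace F. cls p v \<in> U}"
    by simp
qed

text \<open>The quotient map \<open>Q \<times> F \<rightarrow> E\<close> is open: the saturation of \<open>V \<times> W\<close> is the union of
  its translates \<open>{(p, v). p b\<inverse> \<in> V \<and> b v \<in> W}\<close>.\<close>
lemma openin_cls_image:
  assumes V: "openin Q V" and W: "openin F W"
  shows "openin E {cls p v | p v. p \<in> V \<and> v \<in> W}" (is "openin E ?N")
proof -
  have V_Q: "V \<subseteq> topspace Q" and W_F: "W \<subseteq> topspace F"
    using V W by (simp_all add: openin_subset)
  define G where "G b = {x \<in> topspace (prod_topology Q F). ra (fst x) (i b) \<in> V \<and> la b (snd x) \<in> W}"
    for b
  have "openin (prod_topology Q F) (G b)" if b: "b \<in> topspace TH" for b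
  proof -
    have "continuous_map (prod_topology Q F) (prod_topology Q TH) (\<lambda>x. (fst x, i b))"
      using inv_closed[OF b] by (intro continuous_map_pairedI continuous_map_fst) simp
    from continuous_map_compose[OF this continuous_ra]
    have cont_V: "continuous_map (prod_topology Q F) Q (\<lambda>x. ra (fst x) (i b))"
      by (simp add: o_def)
    have "continuous_map (prod_topology Q F) (prod_topology TH F) (\<lambda>x. (b, snd x))"
      using b by (intro continuous_map_pairedI continuous_map_snd) simp
    from continuous_map_compose[OF this continuous_la]
    have cont_W: "continuous_map (prod_topology Q F) F (\<lambda>x. la b (snd x))"
      by (simp add: o_def)
    have "openin (prod_topology Q F)
        ({x \<in> topspace (prod_topology Q F). ra (fst x) (i b) \<in> V} \<inter>
         {x \<in> topspace (prod_topology Q F). la b (snd x) \<in> W})"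
      using openin_continuous_map_preimage[OF cont_V V] openin_continuous_map_preimage[OF cont_W W]
      by (rule openin_Int)
    moreover have "G b = {x \<in> topspace (prod_topology Q F). ra (fst x) (i b) \<in> V} \<inter>
         {x \<in> topspace (prod_topology Q F). la b (snd x) \<in> W}"
      unfolding G_def by blast
    ultimately show ?thesis
      by simp
  qed
  then have "openin (prod_topology Q F) (\<Union>(G ` topspace TH))"
    by (intro openin_Union) blast
  moreover have "cls_preimage ?N = \<Union>(G ` topspace TH)"
  proof (intro equalityI subsetI)
    fix x assume "x \<in> cls_preimage ?N"
    then obtain p v where x: "fst x \<in> topspace Q" "snd x \<in> topspace F"
      and pv: "p \<in> V" "v \<in> W" "cls (fst x) (snd x) = cls p v"
      by auto
    have p: "p \<in> topspace Q" and v: "v \<in> topspace F"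
      using pv V_Q W_F by auto
    obtain a where a: "a \<in> topspace TH" "fst x = ra p a" "v = la a (snd x)"
      using cls_eq_iff[OF x(1) p x(2) v] pv(3) by blast
    have "ra (fst x) (i a) = p"
      using ra_ra_inv[OF p a(1)] a(2) by simp
    then have "x \<in> G a"
      unfolding G_def using x pv a by (simp add: mem_Times_iff)
    with a(1) show "x \<in> \<Union>(G ` topspace TH)"
      by blast
  next
    fix x assume "x \<in> \<Union>(G ` topspace TH)"
    then obtain b where b: "b \<in> topspace TH" "x \<in> G b"
      by blast
    then have x: "fst x \<in> topspace Q" "snd x \<in> topspace F"
      and Vb: "ra (fst x) (i b) \<in> V" and Wb: "la b (snd x) \<in> W"
      unfolding G_def by auto
    have "cls (fst x) (snd x) = cls (ra (fst x) (i b)) (la b (snd x))"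
      using cls_eq_iff[OF x(1) ra_closed[OF x(1) inv_closed[OF b(1)]] x(2) la_closed[OF b(1) x(2)]]
        ra_inv_ra[OF x(1) b(1)] b(1) by metis
    with Vb Wb have "cls (fst x) (snd x) \<in> ?N"
      by blast
    with x show "x \<in> cls_preimage ?N"
      by (simp add: mem_Times_iff)
  qed
  moreover have "?N \<subseteq> assoc_space TH Q ra F la"
    using V_Q W_F cls_in_assoc_space by blast
  ultimately show ?thesis
    unfolding openin_assoc_top by simp
qed

context
  fixes \<phi> assumes endo: "local_endo X TH Q \<pi> ra \<phi>"
begin

lemma local_endo_dom_in_topspace: "p \<in> dom \<phi> \<Longrightarrow> p \<in> topspace Q"
  and local_endo_in_topspace: "p \<in> dom \<phi> \<Longrightarrow> the (\<phi> p) \<in> topspace Q"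
  and local_endo_ra: "p \<in> dom \<phi> \<Longrightarrow> a \<in> topspace TH \<Longrightarrow> \<phi> (ra p a) = Some (ra (the (\<phi> p)) a)"
  using endo unfolding local_endo_def by blast+

lemma local_endo_dom_ra_iff:
  assumes "p \<in> topspace Q" "a \<in> topspace TH"
  shows "ra p a \<in> dom \<phi> \<longleftrightarrow> p \<in> dom \<phi>"
proof -
  obtain V where "dom \<phi> = {q \<in> topspace Q. \<pi> q \<in> V}"
    using endo unfolding local_endo_def by blast
  then show ?thesis
    using ra_closed[OF assms] pi_ra[OF assms] assms(1) by simp
qed

text \<open>\<open>induced_E\<close> evaluates \<open>\<phi>\<close> at a representative chosen by \<open>SOME\<close>; equivariance
  of \<open>\<phi>\<close> makes the result independent of that choice.\<close>
lemma induced_E_cls: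
  assumes p: "p \<in> dom \<phi>" and v: "v \<in> topspace F"
  shows "induced_E TH Q ra F la \<phi> (cls p v) = Some (cls (the (\<phi> p)) v)"
proof -
  have p_Q: "p \<in> topspace Q"
    using local_endo_dom_in_topspace[OF p] .
  have ex: "\<exists>x\<in>cls p v. fst x \<in> dom \<phi>"
    using cls_refl[OF p_Q v] p by force
  define x where "x = (SOME x. x \<in> cls p v \<and> fst x \<in> dom \<phi>)"
  have x: "x \<in> cls p v" "fst x \<in> dom \<phi>"
    unfolding x_def using someI_ex[of "\<lambda>x. x \<in> cls p v \<and> fst x \<in> dom \<phi>"] ex by blast+
  then obtain a where a: "fst x \<in> topspace Q" "a \<in> topspace TH" "p = ra (fst x) a"
    "snd x = la a v"
    using mem_cls_iff[of "fst x" "snd x"] by auto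
  have "the (\<phi> p) = ra (the (\<phi> (fst x))) a"
    using local_endo_ra[OF x(2) a(2)] a(3) by simp
  then have "cls (the (\<phi> p)) v = cls (the (\<phi> (fst x))) (snd x)"
    using cls_ra[OF local_endo_in_topspace[OF x(2)] a(2) v] a(4) by simp
  moreover have "induced_E TH Q ra F la \<phi> (cls p v) = Some (cls (the (\<phi> (fst x))) (snd x))"
    unfolding induced_E_def using cls_in_assoc_space[OF p_Q v] ex x_def by (simp add: Let_def)
  ultimately show ?thesis
    by simp
qed

lemma induced_E_cls_SomeD:
  assumes p: "p \<in> topspace Q" and v: "v \<in> topspace F"
    and y: "induced_E TH Q ra F la \<phi> (cls p v) = Some y"
  shows "p \<in> dom \<phi>" and "y = cls (the (\<phi> p)) v"
proof -
  have "\<exists>x\<in>cls p v. fst x \<in> dom \<phi>"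
    using y unfolding induced_E_def by (auto split: if_splits)
  then obtain p' v' where "(p', v') \<in> cls p v" "p' \<in> dom \<phi>"
    by force
  then obtain a where "p' \<in> topspace Q" "a \<in> topspace TH" "p = ra p' a"
    unfolding mem_cls_iff by blast
  with \<open>p' \<in> dom \<phi>\<close> show p_dom: "p \<in> dom \<phi>"
    using local_endo_dom_ra_iff by blast
  show "y = cls (the (\<phi> p)) v"
    using induced_E_cls[OF p_dom v] y by simp
qed

end

lemma induced_E_SomeD:
  assumes "induced_E TH Q ra F la \<phi> z = Some y"
  shows "\<exists>p v. p \<in> topspace Q \<and> v \<in> topspace F \<and> z = cls p v"
proof -
  have "z \<in> assoc_space TH Q ra F la"
    using assms unfolding induced_E_def by (auto split: if_splits)
  then show ?thesis
    unfolding assoc_space_def by blast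
qed

end

section \<open>The fibre over \<open>q\<close>\<close>

lemma mem_orbit_action_maps:
  "w \<in> orbit (action_maps F la T) v \<longleftrightarrow> v \<in> topspace F \<and> (\<exists>a\<in>T. w = la a v)"
  unfolding mem_orbit_iff action_maps_def by (auto split: if_splits)

lemma orbit_transitive_action_maps:
  assumes "\<And>a b v. a \<in> T \<Longrightarrow> b \<in> T \<Longrightarrow> v \<in> topspace F \<Longrightarrow> \<exists>c\<in>T. la c v = la b (la a v)"
  shows "orbit_transitive (action_maps F la T)"
  unfolding orbit_transitive_def
proof (intro allI impI subsetI)
  fix v u w
  assume "u \<in> orbit (action_maps F la T) v" "w \<in> orbit (action_maps F la T) u"
  then obtain a b where "v \<in> topspace F" "a \<in> T" "u = la a v" "b \<in> T" "w = la b u"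
    unfolding mem_orbit_action_maps by blast
  with assms show "w \<in> orbit (action_maps F la T) v"
    unfolding mem_orbit_action_maps by metis
qed

locale endomorphism_semigroup = associated_bundle +
  fixes SQ and q
  assumes SQ_semigroup: "local_semigroup Q SQ"
    and SQ_endo: "\<forall>\<phi>\<in>SQ. local_endo X TH Q \<pi> ra \<phi>"
    and open_borbit: "\<forall>p\<in>topspace Q. openin Q (borbit SQ p)"
    and q_Q: "q \<in> topspace Q"
begin

abbreviation "Sq \<equiv> action_maps F la (fiber_semigroup TH ra SQ q)"
abbreviation "SE \<equiv> induced_E TH Q ra F la ` SQ"

lemma mem_fiber_semigroup_iff:
  "a \<in> fiber_semigroup TH ra SQ q \<longleftrightarrow> a \<in> topspace TH \<and> (\<exists>\<phi>\<in>SQ. \<phi> q = Some (ra q a))"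
  unfolding fiber_semigroup_def mem_orbit_iff by simp

lemma fiber_semigroup_m:
  assumes a: "a \<in> fiber_semigroup TH ra SQ q" and b: "b \<in> fiber_semigroup TH ra SQ q"
  shows "m b a \<in> fiber_semigroup TH ra SQ q"
proof -
  obtain \<phi> where \<phi>: "\<phi> \<in> SQ" "\<phi> q = Some (ra q a)" and a_H: "a \<in> topspace TH"
    using a mem_fiber_semigroup_iff by blast
  obtain \<psi> where \<psi>: "\<psi> \<in> SQ" "\<psi> q = Some (ra q b)" and b_H: "b \<in> topspace TH"
    using b mem_fiber_semigroup_iff by blast
  have "\<psi> (ra q a) = Some (ra (ra q b) a)"
    using local_endo_ra[of \<psi> q a] SQ_endo \<psi> a_H by auto
  also have "\<dots> = Some (ra q (m b a))"
    using ra_m[OF q_Q b_H a_H] by simp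
  finally have "\<psi> \<circ>\<^sub>m \<phi> \<in> SQ" "(\<psi> \<circ>\<^sub>m \<phi>) q = Some (ra q (m b a))"
    using local_semigroup_map_comp[OF SQ_semigroup \<phi>(1) \<psi>(1) \<phi>(2)] by blast+
  then show ?thesis
    using mem_fiber_semigroup_iff m_closed[OF b_H a_H] by blast
qed

lemma orbit_transitive_Sq: "orbit_transitive Sq"
proof (rule orbit_transitive_action_maps)
  fix a b v
  assume "a \<in> fiber_semigroup TH ra SQ q" "b \<in> fiber_semigroup TH ra SQ q" "v \<in> topspace F"
  then show "\<exists>c\<in>fiber_semigroup TH ra SQ q. la c v = la b (la a v)"
    using fiber_semigroup_m la_m mem_fiber_semigroup_iff by metis
qed

lemma cls_mem_orbit_SE_iff:
  assumes v: "v \<in> topspace F" and w: "w \<in> topspace F"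
  shows "cls q w \<in> orbit SE (cls q v) \<longleftrightarrow> w \<in> orbit Sq v"
proof
  assume "cls q w \<in> orbit SE (cls q v)"
  then obtain \<phi> where \<phi>: "\<phi> \<in> SQ" "induced_E TH Q ra F la \<phi> (cls q v) = Some (cls q w)"
    unfolding mem_orbit_iff by blast
  have endo: "local_endo X TH Q \<pi> ra \<phi>"
    using SQ_endo \<phi>(1) by blast
  have q_dom: "q \<in> dom \<phi>" and "cls q w = cls (the (\<phi> q)) v"
    using induced_E_cls_SomeD[OF endo q_Q v \<phi>(2)] by simp_all
  then obtain a where a: "a \<in> topspace TH" "the (\<phi> q) = ra q a" "w = la a v"
    using cls_eq_iff[OF local_endo_in_topspace[OF endo q_dom] q_Q v w] by metis
  have "\<phi> q = Some (ra q a)"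
    using q_dom a(2) by auto
  then have "a \<in> fiber_semigroup TH ra SQ q"
    using mem_fiber_semigroup_iff a(1) \<phi>(1) by blast
  with v a(3) show "w \<in> orbit Sq v"
    unfolding mem_orbit_action_maps by blast
next
  assume "w \<in> orbit Sq v"
  then obtain a where a: "a \<in> fiber_semigroup TH ra SQ q" "w = la a v"
    unfolding mem_orbit_action_maps by blast
  then obtain \<phi> where \<phi>: "\<phi> \<in> SQ" "\<phi> q = Some (ra q a)" and a_H: "a \<in> topspace TH"
    using mem_fiber_semigroup_iff by blast
  have "induced_E TH Q ra F la \<phi> (cls q v) = Some (cls (ra q a) v)"
    using induced_E_cls[of \<phi> q v] SQ_endo \<phi> v by auto
  also have "\<dots> = Some (cls q w)"
    using cls_ra[OF q_Q a_H v] a(2) by simp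
  finally show "cls q w \<in> orbit SE (cls q v)"
    unfolding mem_orbit_iff using \<phi>(1) by blast
qed

lemma orbit_transitive_SE: "orbit_transitive SE"
  unfolding orbit_transitive_def
proof (intro allI impI subsetI)
  fix z u y
  assume "u \<in> orbit SE z" "y \<in> orbit SE u"
  then obtain \<phi> \<psi> where \<phi>: "\<phi> \<in> SQ" "induced_E TH Q ra F la \<phi> z = Some u"
    and \<psi>: "\<psi> \<in> SQ" "induced_E TH Q ra F la \<psi> u = Some y"
    unfolding mem_orbit_iff by blast
  have endo: "local_endo X TH Q \<pi> ra \<phi>" "local_endo X TH Q \<pi> ra \<psi>"
    using SQ_endo \<phi>(1) \<psi>(1) by blast+
  obtain p v where p: "p \<in> topspace Q" and v: "v \<in> topspace F" and z: "z = cls p v"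
    using induced_E_SomeD[OF \<phi>(2)] by blast
  have p_dom: "p \<in> dom \<phi>" and u: "u = cls (the (\<phi> p)) v"
    using induced_E_cls_SomeD[OF endo(1) p v] \<phi>(2) z by simp_all
  have \<phi>p_dom: "the (\<phi> p) \<in> dom \<psi>" and y: "y = cls (the (\<psi> (the (\<phi> p)))) v"
    using induced_E_cls_SomeD[OF endo(2) local_endo_in_topspace[OF endo(1) p_dom] v] \<psi>(2) u
    by simp_all
  have "\<psi> \<circ>\<^sub>m \<phi> \<in> SQ" and comp: "(\<psi> \<circ>\<^sub>m \<phi>) p = Some (the (\<psi> (the (\<phi> p))))"
    using local_semigroup_map_comp[OF SQ_semigroup \<phi>(1) \<psi>(1)] p_dom \<phi>p_dom by auto
  moreover have "induced_E TH Q ra F la (\<psi> \<circ>\<^sub>m \<phi>) z = Some y"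
    using induced_E_cls[of "\<psi> \<circ>\<^sub>m \<phi>" p v] SQ_endo \<open>\<psi> \<circ>\<^sub>m \<phi> \<in> SQ\<close> comp v y z by auto
  ultimately show "y \<in> orbit SE z"
    unfolding mem_orbit_iff by blast
qed

lemma self_accessible_SE_imp_Sq:
  assumes v: "v \<in> topspace F" and sa: "self_accessible E SE (cls q v)"
  shows "self_accessible F Sq v"
proof -
  define U where "U = E interior_of borbit SE (cls q v)"
  define T where "T = {w \<in> topspace F. cls q w \<in> U}"
  have "openin F T"
    unfolding T_def U_def by (rule openin_continuous_map_preimage[OF continuous_map_cls[OF q_Q]]) simp
  moreover have "v \<in> T"
    using v sa unfolding T_def U_def self_accessible_def by simp
  moreover have "T \<subseteq> borbit Sq v"
  proof
    fix w assume "w \<in> T"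
    then have w: "w \<in> topspace F" and "cls q w \<in> borbit SE (cls q v)"
      unfolding T_def U_def using interior_of_subset[of E "borbit SE (cls q v)"] by auto
    from this(2) have "cls q v \<in> orbit SE (cls q w)"
      unfolding mem_borbit_iff_orbit .
    then show "w \<in> borbit Sq v"
      unfolding mem_borbit_iff_orbit using cls_mem_orbit_SE_iff[OF w v] by simp
  qed
  ultimately show ?thesis
    unfolding self_accessible_def using interior_of_maximal by blast
qed

lemma cls_mem_borbit_SE:
  assumes p: "p \<in> borbit SQ q" and w: "w \<in> topspace F" and "v \<in> orbit Sq w"
  shows "cls p w \<in> borbit SE (cls q v)"
proof -
  obtain b where b: "b \<in> fiber_semigroup TH ra SQ q" "v = la b w"
    using \<open>v \<in> orbit Sq w\<close> unfolding mem_orbit_action_maps by blast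
  then obtain \<phi> where \<phi>: "\<phi> \<in> SQ" "\<phi> q = Some (ra q b)" and b_H: "b \<in> topspace TH"
    using mem_fiber_semigroup_iff by blast
  obtain \<psi> where \<psi>: "\<psi> \<in> SQ" "\<psi> p = Some q"
    using p unfolding borbit_def by blast
  have comp: "\<phi> \<circ>\<^sub>m \<psi> \<in> SQ" "(\<phi> \<circ>\<^sub>m \<psi>) p = Some (ra q b)"
    using local_semigroup_map_comp[OF SQ_semigroup \<psi>(1) \<phi>(1) \<psi>(2) \<phi>(2)] by blast+
  have "induced_E TH Q ra F la (\<phi> \<circ>\<^sub>m \<psi>) (cls p w) = Some (cls (ra q b) w)"
    using induced_E_cls[of "\<phi> \<circ>\<^sub>m \<psi>" p w] SQ_endo comp w by auto
  also have "\<dots> = Some (cls q v)"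
    using cls_ra[OF q_Q b_H w] b(2) by simp
  finally show ?thesis
    unfolding borbit_def using comp(1) by blast
qed

text \<open>The open set \<open>(S\<^sub>Q\<^sup>*q)\<cdot>W\<close> contains \<open>q\<cdot>v = (qa\<inverse>)\<cdot>v\<close>, where \<open>a \<in> S\<^sub>q\<close> fixes \<open>v\<close>.\<close>
lemma self_accessible_Sq_imp_SE:
  assumes v: "v \<in> topspace F" and sa: "self_accessible F Sq v"
  shows "self_accessible E SE (cls q v)"
proof -
  define W where "W = F interior_of borbit Sq v"
  have W: "openin F W" "v \<in> W" "W \<subseteq> borbit Sq v"
    using sa interior_of_subset[of F "borbit Sq v"] unfolding W_def self_accessible_def by simp_all
  define N where "N = {cls p w | p w. p \<in> borbit SQ q \<and> w \<in> W}"
  have "openin E N"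
    unfolding N_def using openin_cls_image open_borbit q_Q W(1) by blast
  moreover have "cls q v \<in> N"
  proof -
    obtain a where a: "a \<in> fiber_semigroup TH ra SQ q" "v = la a v"
      using self_accessible_in_orbit[OF sa] unfolding mem_orbit_action_maps by blast
    then obtain \<phi> where \<phi>: "\<phi> \<in> SQ" "\<phi> q = Some (ra q a)" and a_H: "a \<in> topspace TH"
      using mem_fiber_semigroup_iff by blast
    have endo: "local_endo X TH Q \<pi> ra \<phi>"
      using SQ_endo \<phi>(1) by blast
    have q_dom: "q \<in> dom \<phi>"
      using \<phi>(2) by blast
    have "\<phi> (ra q (i a)) = Some (ra (ra q a) (i a))"
      using local_endo_ra[OF endo q_dom inv_closed[OF a_H]] \<phi>(2) by simp
    then have "ra q (i a) \<in> borbit SQ q"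
      using ra_ra_inv[OF q_Q a_H] \<phi>(1) unfolding borbit_def by auto
    moreover have "cls (ra q (i a)) v = cls q v"
      using cls_ra[OF q_Q inv_closed[OF a_H] v] la_inv_la[OF v a_H] a(2) by simp
    ultimately show ?thesis
      unfolding N_def using W(2) by (metis (mono_tags, lifting) mem_Collect_eq)
  qed
  moreover have "N \<subseteq> borbit SE (cls q v)"
  proof
    fix z assume "z \<in> N"
    then obtain p w where z: "z = cls p w" and p: "p \<in> borbit SQ q" and "w \<in> W"
      unfolding N_def by blast
    then have "w \<in> topspace F" "v \<in> orbit Sq w"
      using W(3) openin_subset[OF W(1)] unfolding mem_borbit_iff_orbit[symmetric] by blast+
    with p show "z \<in> borbit SE (cls q v)"
      unfolding z by (rule cls_mem_borbit_SE)
  qed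
  ultimately show ?thesis
    unfolding self_accessible_def using interior_of_maximal by blast
qed

end

theorem mainTheorem12:
  fixes X :: "'x topology" and TH :: "'h topology"
    and m :: "'h \<Rightarrow> 'h \<Rightarrow> 'h" and e :: 'h and i :: "'h \<Rightarrow> 'h"
    and Q :: "'q topology" and \<pi> :: "'q \<Rightarrow> 'x" and ra :: "'q \<Rightarrow> 'h \<Rightarrow> 'q"
    and F :: "'f topology" and la :: "'h \<Rightarrow> 'f \<Rightarrow> 'f"
    and SQ :: "('q \<rightharpoonup> 'q) set"
    and C :: "'x set" and q :: 'q
  assumes princ: "principal_bundle X TH m e i Q \<pi> ra"
    and action: "continuous_left_action TH m e F la"
    and open_act: "open_action TH F la"
    and trans_act: "transitive_action TH F la"
    and SQ_semigroup: "local_semigroup Q SQ"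
    and SQ_endo: "\<forall>\<phi>\<in>SQ. local_endo X TH Q \<pi> ra \<phi>"
    and open_borbits: "\<forall>p\<in>topspace Q. openin Q (borbit SQ p)"
    and C_cs: "control_set X (induced_X \<pi> ` SQ) C"
    and q_Q: "q \<in> topspace Q"
    and q_C0: "\<pi> q \<in> transitivity_set X (induced_X \<pi> ` SQ) C"
  shows "\<exists>A :: ('q \<times> 'f) set set \<Rightarrow> 'f set.
     let E = assoc_top TH Q ra F la;
         SE = induced_E TH Q ra F la ` SQ;
         Sq = action_maps F la (fiber_semigroup TH ra SQ q);
         Ex = assoc_fiber TH Q \<pi> ra F la (\<pi> q);
         \<D> = {D. control_set E SE D \<and> transitivity_set E SE D \<inter> Ex \<noteq> {}}
     in (\<forall>D\<in>\<D>. control_set F Sq (A D) \<and>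
            transitivity_set E SE D \<inter> Ex
              = assoc_image TH Q ra F la q (transitivity_set F Sq (A D)))
        \<and> bij_betw A \<D> {B. control_set F Sq B}
        \<and> (\<forall>D\<in>\<D>. \<forall>D'\<in>\<D>. control_le E SE D D' \<longleftrightarrow> control_le F Sq (A D) (A D'))"
proof -
  interpret endomorphism_semigroup X TH m e i Q \<pi> ra F la SQ q
    using princ action SQ_semigroup SQ_endo open_borbits q_Q by unfold_locales
  interpret orbit_correspondence E SE F Sq "cls q"
    using orbit_transitive_SE orbit_transitive_Sq cls_mem_orbit_SE_iff
      self_accessible_SE_imp_Sq self_accessible_Sq_imp_SE
    by unfold_locales blast+
  show ?thesis
    using control_set_correspondence
    unfolding Let_def assoc_image_def assoc_fiber_eq_image[OF q_Q] meets_image_def by simp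
qed

end
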